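(* For all $U,V\in\mathcal{U}(d)$, $|H_2(U)-H_2(V)|\le\frac{4\pi}{\sqrt d}\|U-V\|_F$; that is, $H_2$ is Lipschitz on $\mathcal{U}(d)$ with respect to the Hilbert–Schmidt norm with Lipschitz constant at most $4\pi/\sqrt d$.
   Context: On $\mathbb{C}^{d_L}$ let $Z|k\rangle=\omega^k|k\rangle$, $X|k\rangle=|k+1\rangle$ (mod $d_L$), $\omega=e^{2\pi i/d_L}$, $\tau=-e^{i\pi/d_L}$, $D_{(a_1,a_2)}=\tau^{a_1a_2}X^{a_1}Z^{a_2}$, and for $\mathbf a=\mathbf a_1\oplus\cdots\oplus\mathbf a_n\in\mathbb{Z}_{d_L}^{2n}$ let $D_{\mathbf a}=D_{\mathbf a_1}\otimes\cdots\otimes D_{\mathbf a_n}$ acting on $\mathbb{C}^d$, $d=d_L^n$. The 2-Clifford entropy of a unitary $U$ is $H_2(U)=1-\frac{1}{d^6}\sum_{\mathbf a,\mathbf b}\big|\operatorname{tr}(D_{\mathbf a}^\dagger UD_{\mathbf b}U^\dagger)\big|^4$. $\|A\|_F=\sqrt{\operatorname{tr}(A^\dagger A)}$. *)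

theory Defs
  imports Complex_Main "Jordan_Normal_Form.Matrix"
begin

text \<open>Qudit dimension dL, number of qudits n, total dimension d = dL^n.\<close>

definition omega :: "nat \<Rightarrow> complex" where
  "omega dL = cis (2 * pi / real dL)"

definition tau :: "nat \<Rightarrow> complex" where
  "tau dL = - cis (pi / real dL)"

definition Zmat :: "nat \<Rightarrow> complex mat" where
  "Zmat dL = mat dL dL (\<lambda>(i,j). if i = j then omega dL ^ j else 0)"

definition Xmat :: "nat \<Rightarrow> complex mat" where
  "Xmat dL = mat dL dL (\<lambda>(i,j). if i = (j + 1) mod dL then 1 else 0)"

definition Dq :: "nat \<Rightarrow> nat \<times> nat \<Rightarrow> complex mat" where
  "Dq dL a = tau dL ^ (fst a * snd a) \<cdot>\<^sub>m (Xmat dL ^\<^sub>m fst a * Zmat dL ^\<^sub>m snd a)"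

definition kron :: "complex mat \<Rightarrow> complex mat \<Rightarrow> complex mat" where
  "kron A B = mat (dim_row A * dim_row B) (dim_col A * dim_col B)
     (\<lambda>(i,j). A $$ (i div dim_row B, j div dim_col B) * B $$ (i mod dim_row B, j mod dim_col B))"

fun Dn :: "nat \<Rightarrow> (nat \<times> nat) list \<Rightarrow> complex mat" where
  "Dn dL [] = 1\<^sub>m 1"
| "Dn dL (p # ps) = kron (Dq dL p) (Dn dL ps)"

text \<open>Index set Z_dL^{2n}, represented as lists of n pairs with entries < dL.\<close>
definition Idx :: "nat \<Rightarrow> nat \<Rightarrow> (nat \<times> nat) list set" where
  "Idx dL n = {a. length a = n \<and> (\<forall>p \<in> set a. fst p < dL \<and> snd p < dL)}"

definition mtrace :: "complex mat \<Rightarrow> complex" where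
  "mtrace A = (\<Sum>i<dim_row A. A $$ (i,i))"

definition adj :: "complex mat \<Rightarrow> complex mat" where
  "adj A = mat (dim_col A) (dim_row A) (\<lambda>(i,j). cnj (A $$ (j,i)))"

definition unitary_mat :: "nat \<Rightarrow> complex mat \<Rightarrow> bool" where
  "unitary_mat d U \<longleftrightarrow> U \<in> carrier_mat d d \<and> adj U * U = 1\<^sub>m d \<and> U * adj U = 1\<^sub>m d"

definition H2 :: "nat \<Rightarrow> nat \<Rightarrow> complex mat \<Rightarrow> real" where
  "H2 dL n U = 1 - (1 / real (dL ^ n) ^ 6) *
     (\<Sum>a\<in>Idx dL n. \<Sum>b\<in>Idx dL n.
        cmod (mtrace (adj (Dn dL a) * U * Dn dL b * adj U)) ^ 4)"

definition frob_norm :: "complex mat \<Rightarrow> real" where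
  "frob_norm A = sqrt (Re (mtrace (adj A * A)))"

end

theory Submission
  imports Defs "Jordan_Normal_Form.Determinant" "HOL-Analysis.L2_Norm"
begin

(* The Weyl operators D_a, a in Z_dL^2n, form a tight frame of the Hilbert-Schmidt space:
   sum_a |tr (D_a^* X)|^2 = d * ||X||_F^2.  Fix b and put x_a = |tr (D_a^* U D_b U^* )| and
   y_a = |tr (D_a^* V D_b V^* )|.  Both vectors have squared l2-norm s = d * ||D_b||_F^2 = d^2, and
   |x_a - y_a| is at most the Weyl coefficient of U D_b U^* - V D_b V^*, whose l2-norm is
   sqrt d * ||U D_b U^* - V D_b V^*||_F <= 2 sqrt d * ||U - V||_F.  From
   |x^4 - y^4| <= |x - y| (x + y) (x^2 + y^2) and Cauchy-Schwarz,
   |sum_a x_a^4 - y_a^4| <= 4 s^(3/2) ||x - y||_2 <= 8 d^3 sqrt d ||U - V||_F.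
   Summing over the d^2 values of b and dividing by d^6 gives the constant 8 / sqrt d <= 4 pi / sqrt d. *)

section \<open>Roots of unity and cyclic shifts\<close>

lemma norm_omega [simp]: "cmod (omega N) = 1"
  by (simp add: omega_def)

lemma norm_tau [simp]: "cmod (tau N) = 1"
  by (simp add: tau_def)

lemma cnj_mult_self_eq_1: "cmod z = 1 \<Longrightarrow> cnj z * z = 1"
  by (metis complex_norm_square mult.commute of_real_1 power_one)

lemma omega_power: "omega N ^ k = cis (2 * pi * real k / real N)"
  by (simp add: omega_def DeMoivre mult_ac)

lemma inj_on_omega_power: "0 < N \<Longrightarrow> inj_on (\<lambda>k. omega N ^ k) {..<N}"
  using bij_betw_roots_unity[of N] by (simp add: bij_betw_def omega_power)

lemma sum_powers_root_of_unity:
  fixes z :: "'a :: field"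
  assumes "z ^ N = 1"
  shows "(\<Sum>b<N. z ^ b) = (if z = 1 then of_nat N else 0)"
  using assms by (simp add: sum_gp_strict)

lemma sum_omega_character:
  assumes "j < N" "l < N"
  shows "(\<Sum>b<N. cnj (omega N ^ (b * j)) * omega N ^ (b * l)) = (if j = l then of_nat N else 0)"
proof -
  define z where "z = cnj (omega N ^ j) * omega N ^ l"
  have N: "0 < N" using assms by simp
  have unit: "cnj (omega N ^ j) * omega N ^ j = 1"
    by (rule cnj_mult_self_eq_1) (simp add: norm_power)
  have "z ^ N = cnj ((omega N ^ N) ^ j) * (omega N ^ N) ^ l"
    by (simp add: z_def power_mult_distrib mult.commute flip: power_mult complex_cnj_power)
  then have "z ^ N = 1" using N by (simp add: omega_power)
  moreover have "z = 1 \<longleftrightarrow> j = l"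
  proof
    assume "z = 1"
    have "omega N ^ l = (cnj (omega N ^ j) * omega N ^ j) * omega N ^ l"
      by (simp only: unit mult_1)
    also have "\<dots> = omega N ^ j * z"
      by (simp only: z_def mult_ac)
    finally have "omega N ^ j = omega N ^ l"
      using \<open>z = 1\<close> by simp
    then show "j = l" using inj_on_omega_power[OF N] assms by (auto dest: inj_onD)
  next
    assume "j = l"
    then show "z = 1" unfolding z_def using unit by simp
  qed
  moreover have "cnj (omega N ^ (b * j)) * omega N ^ (b * l) = z ^ b" for b
    by (simp add: z_def power_mult_distrib mult.commute[of b] power_mult flip: complex_cnj_power)
  ultimately show ?thesis by (simp add: sum_powers_root_of_unity)
qed

lemma bij_betw_add_mod:
  fixes N c :: nat
  assumes "0 < N"
  shows "bij_betw (\<lambda>a. (a + c) mod N) {..<N} {..<N}"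
proof -
  have "inj_on (\<lambda>a. (a + c) mod N) {..<N}"
  proof (rule inj_onI)
    fix a b assume "a \<in> {..<N}" "b \<in> {..<N}" "(a + c) mod N = (b + c) mod N"
    then have "int N dvd int a - int b" "\<bar>int a - int b\<bar> < int N"
      by (auto simp: mod_eq_iff_dvd_symdiff_nat)
    then show "a = b"
      using dvd_imp_le_int[of "int a - int b" "int N"] by fastforce
  qed
  moreover have "(\<lambda>a. (a + c) mod N) ` {..<N} \<subseteq> {..<N}" using assms by auto
  ultimately show ?thesis by (simp add: bij_betw_def endo_inj_surj)
qed

lemma sum_delta_add_mod:
  fixes i N c :: nat
  assumes "i < N"
  shows "(\<Sum>a<N. if i = (a + c) mod N then x else 0) = (x :: 'a :: comm_monoid_add)"
proof -
  have "(\<Sum>a<N. if i = (a + c) mod N then x else 0) = (\<Sum>y<N. if i = y then x else 0)"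
    using bij_betw_add_mod[of N c] assms
    by (intro sum.reindex_bij_betw[where h = "\<lambda>a. (a + c) mod N"]) auto
  then show ?thesis using assms by simp
qed

section \<open>Adjoint, trace and Frobenius norm\<close>

lemma row_scalar_prod_col:
  assumes "A \<in> carrier_mat m n" "B \<in> carrier_mat n p" "i < m" "j < p"
  shows "row A i \<bullet> col B j = (\<Sum>k<n. A $$ (i, k) * B $$ (k, j))"
  using assms by (auto simp: scalar_prod_def atLeast0LessThan intro!: sum.cong)

lemma index_mult_mat_sum:
  assumes "A \<in> carrier_mat m n" "B \<in> carrier_mat n p" "i < m" "j < p"
  shows "(A * B) $$ (i, j) = (\<Sum>k<n. A $$ (i, k) * B $$ (k, j))"
  using assms by (simp add: row_scalar_prod_col)

lemma adj_dim [simp]: "dim_row (adj A) = dim_col A" "dim_col (adj A) = dim_row A"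
  by (simp_all add: adj_def)

lemma index_adj [simp]: "i < dim_col A \<Longrightarrow> j < dim_row A \<Longrightarrow> adj A $$ (i, j) = cnj (A $$ (j, i))"
  by (simp add: adj_def)

lemma adj_carrier [simp]: "A \<in> carrier_mat m n \<Longrightarrow> adj A \<in> carrier_mat n m"
  by (rule carrier_matI) (auto dest: carrier_matD)

lemma adj_adj [simp]: "adj (adj A) = A"
  by (rule eq_matI) auto

lemma adj_one [simp]: "adj (1\<^sub>m n) = 1\<^sub>m n"
  by (rule eq_matI) auto

lemma adj_minus:
  assumes "A \<in> carrier_mat m n" "B \<in> carrier_mat m n"
  shows "adj (A - B) = adj A - adj B"
  by (rule eq_matI) (use assms in auto)

lemma adj_mult:
  assumes A: "A \<in> carrier_mat m n" and B: "B \<in> carrier_mat n p"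
  shows "adj (A * B) = adj B * adj A"
proof (rule eq_matI)
  fix i j assume "i < dim_row (adj B * adj A)" "j < dim_col (adj B * adj A)"
  then have i: "i < p" and j: "j < m" using A B by auto
  have "adj (A * B) $$ (i, j) = cnj (\<Sum>k<n. A $$ (j, k) * B $$ (k, i))"
    using A B i j by (simp add: row_scalar_prod_col[OF A B])
  also have "\<dots> = (adj B * adj A) $$ (i, j)"
    using A B i j by (simp add: row_scalar_prod_col[OF adj_carrier[OF B] adj_carrier[OF A]] mult.commute)
  finally show "adj (A * B) $$ (i, j) = (adj B * adj A) $$ (i, j)" .
qed (use A B in auto)

lemma unitary_matI:
  assumes "U \<in> carrier_mat d d" "adj U * U = 1\<^sub>m d"
  shows "unitary_mat d U"
  using assms mat_mult_left_right_inverse[of "adj U" d U] by (simp add: unitary_mat_def)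

lemma unitary_matD:
  assumes "unitary_mat d U"
  shows "U \<in> carrier_mat d d" "adj U \<in> carrier_mat d d" "adj U * U = 1\<^sub>m d" "U * adj U = 1\<^sub>m d"
  using assms by (auto simp: unitary_mat_def)

lemma unitary_conj_carrier:
  assumes "unitary_mat d W" "G \<in> carrier_mat d d"
  shows "W * G * adj W \<in> carrier_mat d d"
  using unitary_matD[OF assms(1)] assms(2) by (intro mult_carrier_mat[of _ d d]) auto

lemma mtrace_mult_comm:
  assumes A: "A \<in> carrier_mat m n" and B: "B \<in> carrier_mat n m"
  shows "mtrace (A * B) = mtrace (B * A)"
proof -
  have "mtrace (A * B) = (\<Sum>i<m. \<Sum>k<n. A $$ (i, k) * B $$ (k, i))"
    using A B by (simp add: mtrace_def row_scalar_prod_col[OF A B])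
  also have "\<dots> = (\<Sum>k<n. \<Sum>i<m. B $$ (k, i) * A $$ (i, k))"
    by (subst sum.swap) (simp add: mult.commute)
  also have "\<dots> = mtrace (B * A)"
    using A B by (simp add: mtrace_def row_scalar_prod_col[OF B A])
  finally show ?thesis .
qed

lemma mtrace_adj_mult:
  assumes A: "A \<in> carrier_mat m n" and X: "X \<in> carrier_mat m n"
  shows "mtrace (adj A * X) = (\<Sum>q\<in>{..<m} \<times> {..<n}. cnj (A $$ q) * X $$ q)"
proof -
  have "mtrace (adj A * X) = (\<Sum>j<n. \<Sum>i<m. cnj (A $$ (i, j)) * X $$ (i, j))"
    using A X by (simp add: mtrace_def row_scalar_prod_col[OF adj_carrier[OF A] X])
  also have "\<dots> = (\<Sum>q\<in>{..<m} \<times> {..<n}. cnj (A $$ q) * X $$ q)"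
    by (subst sum.swap) (simp add: sum.cartesian_product)
  finally show ?thesis .
qed

lemma mtrace_adj_mult_minus:
  assumes A: "A \<in> carrier_mat m n" and X: "X \<in> carrier_mat m n" and Y: "Y \<in> carrier_mat m n"
  shows "mtrace (adj A * (X - Y)) = mtrace (adj A * X) - mtrace (adj A * Y)"
proof -
  have "mtrace (adj A * (X - Y)) = (\<Sum>q\<in>{..<m} \<times> {..<n}. cnj (A $$ q) * X $$ q - cnj (A $$ q) * Y $$ q)"
    using A X Y minus_carrier_mat[OF Y, of X]
    by (auto simp: mtrace_adj_mult right_diff_distrib intro!: sum.cong)
  then show ?thesis
    using A X Y by (simp add: mtrace_adj_mult sum_subtractf)
qed

lemma mtrace_one [simp]: "mtrace (1\<^sub>m d) = of_nat d"
  by (simp add: mtrace_def)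

lemma Re_mtrace_adj_mult_self:
  assumes "A \<in> carrier_mat m n"
  shows "Re (mtrace (adj A * A)) = (\<Sum>q\<in>{..<m} \<times> {..<n}. cmod (A $$ q) ^ 2)"
proof -
  have "complex_of_real (\<Sum>q\<in>{..<m} \<times> {..<n}. cmod (A $$ q) ^ 2)
      = (\<Sum>q\<in>{..<m} \<times> {..<n}. cnj (A $$ q) * A $$ q)"
    unfolding of_real_sum by (intro sum.cong refl) (simp only: complex_norm_square mult.commute)
  also have "\<dots> = mtrace (adj A * A)"
    using assms by (simp add: mtrace_adj_mult)
  finally show ?thesis
    by (metis Re_complex_of_real)
qed

lemma frob_norm_eq_L2_set:
  "A \<in> carrier_mat m n \<Longrightarrow> frob_norm A = L2_set (\<lambda>q. cmod (A $$ q)) ({..<m} \<times> {..<n})"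
  by (simp add: frob_norm_def L2_set_def Re_mtrace_adj_mult_self)

lemma frob_norm_square:
  "A \<in> carrier_mat m n \<Longrightarrow> frob_norm A ^ 2 = (\<Sum>q\<in>{..<m} \<times> {..<n}. cmod (A $$ q) ^ 2)"
  by (simp add: frob_norm_def Re_mtrace_adj_mult_self sum_nonneg)

lemma frob_norm_nonneg: "A \<in> carrier_mat m n \<Longrightarrow> 0 \<le> frob_norm A"
  by (simp add: frob_norm_eq_L2_set)

lemma frob_norm_add_le:
  assumes A: "A \<in> carrier_mat m n" and B: "B \<in> carrier_mat m n"
  shows "frob_norm (A + B) \<le> frob_norm A + frob_norm B"
proof -
  let ?S = "{..<m} \<times> {..<n}"
  have "frob_norm (A + B) \<le> L2_set (\<lambda>q. cmod (A $$ q) + cmod (B $$ q)) ?S"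
    unfolding frob_norm_eq_L2_set[OF add_carrier_mat[OF B]]
    using A B by (intro L2_set_mono) (auto simp: norm_triangle_ineq)
  also have "\<dots> \<le> frob_norm A + frob_norm B"
    unfolding frob_norm_eq_L2_set[OF A] frob_norm_eq_L2_set[OF B] by (rule L2_set_triangle_ineq)
  finally show ?thesis .
qed

lemma frob_norm_adj:
  assumes "A \<in> carrier_mat m n"
  shows "frob_norm (adj A) = frob_norm A"
  using assms mtrace_mult_comm[of A m n "adj A"] by (simp add: frob_norm_def)

lemma frob_norm_isometry_mult:
  assumes W: "W \<in> carrier_mat k m" "adj W * W = 1\<^sub>m m" and A: "A \<in> carrier_mat m n"
  shows "frob_norm (W * A) = frob_norm A"
proof -
  have WA: "adj W * (W * A) = A"
  proof -
    have "adj W * W * A = adj W * (W * A)"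
      by (rule assoc_mult_mat) (use W A in auto)
    then show ?thesis using W A by simp
  qed
  have "adj (W * A) * (W * A) = adj A * adj W * (W * A)"
    by (simp add: adj_mult[OF W(1) A])
  also have "\<dots> = adj A * (adj W * (W * A))"
    by (rule assoc_mult_mat) (use W A in auto)
  also have "\<dots> = adj A * A"
    by (simp only: WA)
  finally show ?thesis by (simp add: frob_norm_def)
qed

lemma frob_norm_mult_coisometry:
  assumes W: "W \<in> carrier_mat n k" "W * adj W = 1\<^sub>m n" and A: "A \<in> carrier_mat m n"
  shows "frob_norm (A * W) = frob_norm A"
proof -
  have "frob_norm (A * W) = frob_norm (adj W * adj A)"
    using frob_norm_adj[of "A * W" m k] A W by (simp add: adj_mult)
  also have "\<dots> = frob_norm (adj A)"
    using W A by (intro frob_norm_isometry_mult) auto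
  also have "\<dots> = frob_norm A"
    using A by (rule frob_norm_adj)
  finally show ?thesis .
qed

lemma frob_norm_unitary: "unitary_mat d U \<Longrightarrow> frob_norm U = sqrt (real d)"
  by (simp add: unitary_mat_def frob_norm_def)

lemma frob_norm_unitary_conj:
  assumes U: "unitary_mat d U" and G: "G \<in> carrier_mat d d"
  shows "frob_norm (U * G * adj U) = frob_norm G"
proof -
  note U' = unitary_matD[OF U]
  have "frob_norm (U * G * adj U) = frob_norm (U * G)"
    using U' G by (intro frob_norm_mult_coisometry[of _ d d]) auto
  also have "\<dots> = frob_norm G"
    using U' G by (intro frob_norm_isometry_mult) auto
  finally show ?thesis .
qed

lemma minus_telescope_mat:
  fixes P Q R :: "'a :: ab_group_add mat"
  assumes "P \<in> carrier_mat m n" "Q \<in> carrier_mat m n" "R \<in> carrier_mat m n"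
  shows "P - R = (P - Q) + (Q - R)"
  by (rule eq_matI) (use assms in \<open>auto simp: algebra_simps\<close>)

lemma frob_norm_unitary_conj_diff_le:
  assumes U: "unitary_mat d U" and V: "unitary_mat d V" and G: "unitary_mat d G"
  shows "frob_norm (U * G * adj U - V * G * adj V) \<le> 2 * frob_norm (U - V)"
proof -
  note U' = unitary_matD[OF U] and V' = unitary_matD[OF V] and G' = unitary_matD[OF G]
  have UV: "U - V \<in> carrier_mat d d" using minus_carrier_mat[OF V'(1)] .
  have UG: "U * G \<in> carrier_mat d d" and VG: "V * G \<in> carrier_mat d d"
    using U'(1) V'(1) G'(1) by simp_all
  have left: "(U - V) * G * adj U = U * G * adj U - V * G * adj U"
    by (simp only: minus_mult_distrib_mat[OF U'(1) V'(1) G'(1)] minus_mult_distrib_mat[OF UG VG U'(2)])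
  have right: "V * G * adj (U - V) = V * G * adj U - V * G * adj V"
    by (simp only: adj_minus[OF U'(1) V'(1)] mult_minus_distrib_mat[OF VG U'(2) V'(2)])
  have "adj U * adj (adj U) = 1\<^sub>m d" using U'(3) by simp
  then have "frob_norm ((U - V) * G * adj U) = frob_norm ((U - V) * G)"
    by (rule frob_norm_mult_coisometry[OF U'(2) _ mult_carrier_mat[OF UV G'(1)]])
  also have "\<dots> = frob_norm (U - V)"
    by (rule frob_norm_mult_coisometry[OF G'(1) G'(4) UV])
  finally have norm_left: "frob_norm ((U - V) * G * adj U) = frob_norm (U - V)" .
  have "V * G * adj (U - V) = V * (G * adj (U - V))"
    by (rule assoc_mult_mat[OF V'(1) G'(1) adj_carrier[OF UV]])
  then have "frob_norm (V * G * adj (U - V)) = frob_norm (G * adj (U - V))"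
    using frob_norm_isometry_mult[OF V'(1) V'(3) mult_carrier_mat[OF G'(1) adj_carrier[OF UV]]] by simp
  also have "\<dots> = frob_norm (U - V)"
    using frob_norm_isometry_mult[OF G'(1) G'(3) adj_carrier[OF UV]] frob_norm_adj[OF UV] by simp
  finally have norm_right: "frob_norm (V * G * adj (U - V)) = frob_norm (U - V)" .
  have "U * G * adj U - V * G * adj V = (U - V) * G * adj U + V * G * adj (U - V)"
    unfolding left right
    by (rule minus_telescope_mat[OF mult_carrier_mat[OF UG U'(2)] mult_carrier_mat[OF VG U'(2)]
          mult_carrier_mat[OF VG V'(2)]])
  also have "frob_norm \<dots> \<le> frob_norm ((U - V) * G * adj U) + frob_norm (V * G * adj (U - V))"
    by (rule frob_norm_add_le[OF mult_carrier_mat[OF mult_carrier_mat[OF UV G'(1)] U'(2)]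
          mult_carrier_mat[OF VG adj_carrier[OF UV]]])
  finally show ?thesis
    using norm_left norm_right by simp
qed

section \<open>Tight frames\<close>

(* Entrywise form of  sum_a |D_a>><<D_a| = c * 1  on the Hilbert-Schmidt space of m x n matrices,
   i.e. of the Parseval identity  sum_a |tr (D_a^* X)|^2 = c * ||X||_F^2  (tight_frame_Parseval). *)
definition tight_frame :: "'i set \<Rightarrow> ('i \<Rightarrow> complex mat) \<Rightarrow> nat \<Rightarrow> nat \<Rightarrow> real \<Rightarrow> bool" where
  "tight_frame I D m n c \<longleftrightarrow> (\<forall>a\<in>I. D a \<in> carrier_mat m n) \<and>
     (\<forall>r\<in>{..<m} \<times> {..<n}. \<forall>q\<in>{..<m} \<times> {..<n}.
        (\<Sum>a\<in>I. cnj (D a $$ r) * D a $$ q) = (if r = q then complex_of_real c else 0))"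

lemma tight_frameI:
  assumes "\<And>a. a \<in> I \<Longrightarrow> D a \<in> carrier_mat m n"
    and "\<And>i j k l. i < m \<Longrightarrow> j < n \<Longrightarrow> k < m \<Longrightarrow> l < n \<Longrightarrow>
      (\<Sum>a\<in>I. cnj (D a $$ (i, j)) * D a $$ (k, l)) = (if (i, j) = (k, l) then complex_of_real c else 0)"
  shows "tight_frame I D m n c"
  using assms by (auto simp: tight_frame_def)

lemma tight_frame_carrier: "tight_frame I D m n c \<Longrightarrow> a \<in> I \<Longrightarrow> D a \<in> carrier_mat m n"
  by (simp add: tight_frame_def)

lemma tight_frame_sum:
  "tight_frame I D m n c \<Longrightarrow> r \<in> {..<m} \<times> {..<n} \<Longrightarrow> q \<in> {..<m} \<times> {..<n} \<Longrightarrow>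
   (\<Sum>a\<in>I. cnj (D a $$ r) * D a $$ q) = (if r = q then complex_of_real c else 0)"
  by (cases r; cases q) (simp add: tight_frame_def)

lemma tight_frame_reindex:
  "inj_on h I \<Longrightarrow> tight_frame (h ` I) D m n c \<longleftrightarrow> tight_frame I (D \<circ> h) m n c"
  by (simp add: tight_frame_def sum.reindex)

lemma tight_frame_Parseval:
  assumes frame: "tight_frame I D m n c" and I: "finite I" and X: "X \<in> carrier_mat m n"
  shows "(\<Sum>a\<in>I. cmod (mtrace (adj (D a) * X)) ^ 2) = c * frob_norm X ^ 2"
proof -
  let ?S = "{..<m} \<times> {..<n}"
  define T where "T a = (\<Sum>q\<in>?S. cnj (D a $$ q) * X $$ q)" for a
  have sq: "complex_of_real (cmod z ^ 2) = cnj z * z" for z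
    by (simp only: complex_norm_square mult.commute)
  have coeff: "mtrace (adj (D a) * X) = T a" if "a \<in> I" for a
    using tight_frame_carrier[OF frame that] X by (simp add: T_def mtrace_adj_mult)
  have "complex_of_real (\<Sum>a\<in>I. cmod (mtrace (adj (D a) * X)) ^ 2) = (\<Sum>a\<in>I. cnj (T a) * T a)"
    unfolding of_real_sum sq by (intro sum.cong refl) (simp add: coeff)
  also have "\<dots> = (\<Sum>a\<in>I. \<Sum>r\<in>?S. \<Sum>q\<in>?S. (cnj (X $$ q) * X $$ r) * (cnj (D a $$ r) * D a $$ q))"
    by (simp add: T_def cnj_sum sum_product mult_ac)
  also have "\<dots> = (\<Sum>r\<in>?S. \<Sum>q\<in>?S. (cnj (X $$ q) * X $$ r) * (\<Sum>a\<in>I. cnj (D a $$ r) * D a $$ q))"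
    by (subst sum.swap) (simp add: sum_distrib_left sum.swap[of _ I])
  also have "\<dots> = (\<Sum>r\<in>?S. \<Sum>q\<in>?S. (cnj (X $$ q) * X $$ r) * (if r = q then complex_of_real c else 0))"
    using frame by (simp add: tight_frame_sum)
  also have "\<dots> = complex_of_real c * (\<Sum>r\<in>?S. cnj (X $$ r) * X $$ r)"
    by (simp add: if_distrib sum_distrib_left mult_ac cong: if_cong)
  also have "\<dots> = complex_of_real (c * frob_norm X ^ 2)"
    by (simp only: frob_norm_square[OF X] of_real_sum of_real_mult sq)
  finally show ?thesis
    by (simp only: of_real_eq_iff)
qed

section \<open>Kronecker products\<close>

lemma less_mult_imp_div_mod_less:
  fixes i :: nat
  assumes "i < m * k"
  shows "i div k < m" "i mod k < k"
  using assms by (auto simp: less_mult_imp_div_less) (metis mod_less_divisor mult_0_right not_less_zero gr0I)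

lemma div_mod_eq_iff: "(i div k = j div k \<and> i mod k = j mod k) \<longleftrightarrow> i = (j :: nat)"
  by (metis div_mult_mod_eq)

lemma sum_lessThan_mult:
  fixes f :: "nat \<Rightarrow> 'a :: comm_monoid_add"
  shows "(\<Sum>t<m * k. f t) = (\<Sum>t1<m. \<Sum>t2<k. f (t1 * k + t2))"
proof -
  have "(\<Sum>t<m * k. f t) = (\<Sum>t1<m. sum f {t1 * k..<t1 * k + k})"
    by (rule sum.nat_group[symmetric])
  also have "\<dots> = (\<Sum>t1<m. \<Sum>t2<k. f (t1 * k + t2))"
  proof (rule sum.cong[OF refl])
    fix t1
    show "sum f {t1 * k..<t1 * k + k} = (\<Sum>t2<k. f (t1 * k + t2))"
      using sum.shift_bounds_nat_ivl[of f 0 "t1 * k" k] by (simp add: atLeast0LessThan add.commute)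
  qed
  finally show ?thesis .
qed

lemma kron_carrier [simp]:
  "A \<in> carrier_mat m1 n1 \<Longrightarrow> B \<in> carrier_mat m2 n2 \<Longrightarrow> kron A B \<in> carrier_mat (m1 * m2) (n1 * n2)"
  by (rule carrier_matI) (auto simp: kron_def dest: carrier_matD)

lemma kron_index:
  assumes "A \<in> carrier_mat m1 n1" "B \<in> carrier_mat m2 n2" "i < m1 * m2" "j < n1 * n2"
  shows "kron A B $$ (i, j) = A $$ (i div m2, j div n2) * B $$ (i mod m2, j mod n2)"
  using assms by (simp add: kron_def)

lemma kron_mult:
  assumes A: "A \<in> carrier_mat m1 n1" and B: "B \<in> carrier_mat m2 n2"
    and C: "C \<in> carrier_mat n1 p1" and D: "D \<in> carrier_mat n2 p2"
  shows "kron A B * kron C D = kron (A * C) (B * D)"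
proof (rule eq_matI)
  fix i j assume "i < dim_row (kron (A * C) (B * D))" "j < dim_col (kron (A * C) (B * D))"
  then have i: "i < m1 * m2" and j: "j < p1 * p2" using A B C D by (auto simp: kron_def)
  note ij = less_mult_imp_div_mod_less[OF i] less_mult_imp_div_mod_less[OF j]
  have "(kron A B * kron C D) $$ (i, j) = (\<Sum>t<n1 * n2. kron A B $$ (i, t) * kron C D $$ (t, j))"
    using A B C D i j by (intro index_mult_mat_sum) auto
  also have "\<dots> = (\<Sum>t1<n1. \<Sum>t2<n2. kron A B $$ (i, t1 * n2 + t2) * kron C D $$ (t1 * n2 + t2, j))"
    by (rule sum_lessThan_mult)
  also have "\<dots> = (\<Sum>t1<n1. \<Sum>t2<n2. (A $$ (i div m2, t1) * C $$ (t1, j div p2))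
                                       * (B $$ (i mod m2, t2) * D $$ (t2, j mod p2)))"
  proof (intro sum.cong refl)
    fix t1 t2 assume "t1 \<in> {..<n1}" "t2 \<in> {..<n2}"
    then have t: "t1 < n1" "t2 < n2" by simp_all
    have "t1 * n2 + t2 < Suc t1 * n2" using t by simp
    also have "\<dots> \<le> n1 * n2" using t by (intro mult_le_mono1) simp
    finally have "t1 * n2 + t2 < n1 * n2" .
    moreover have "(t1 * n2 + t2) div n2 = t1" "(t1 * n2 + t2) mod n2 = t2" using t by simp_all
    ultimately show "kron A B $$ (i, t1 * n2 + t2) * kron C D $$ (t1 * n2 + t2, j)
        = (A $$ (i div m2, t1) * C $$ (t1, j div p2)) * (B $$ (i mod m2, t2) * D $$ (t2, j mod p2))"
      using A B C D i j by (simp add: kron_index)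
  qed
  also have "\<dots> = (\<Sum>t1<n1. A $$ (i div m2, t1) * C $$ (t1, j div p2))
                  * (\<Sum>t2<n2. B $$ (i mod m2, t2) * D $$ (t2, j mod p2))"
    by (simp only: sum_product)
  also have "\<dots> = kron (A * C) (B * D) $$ (i, j)"
    using kron_index[OF mult_carrier_mat[OF A C] mult_carrier_mat[OF B D] i j]
      index_mult_mat_sum[OF A C ij(1) ij(3)] index_mult_mat_sum[OF B D ij(2) ij(4)] by simp
  finally show "(kron A B * kron C D) $$ (i, j) = kron (A * C) (B * D) $$ (i, j)" .
qed (use A B C D in \<open>auto simp: kron_def\<close>)

lemma adj_kron: "adj (kron A B) = kron (adj A) (adj B)"
  by (rule eq_matI) (auto simp: kron_def less_mult_imp_div_mod_less)

lemma kron_one: "kron (1\<^sub>m m) (1\<^sub>m k) = 1\<^sub>m (m * k)"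
proof (rule eq_matI)
  fix i j assume "i < dim_row (1\<^sub>m (m * k))" "j < dim_col (1\<^sub>m (m * k))"
  then have i: "i < m * k" and j: "j < m * k" by auto
  show "kron (1\<^sub>m m) (1\<^sub>m k) $$ (i, j) = 1\<^sub>m (m * k) $$ (i, j)"
    using i j div_mod_eq_iff[of i k j] by (auto simp: kron_def less_mult_imp_div_mod_less)
qed (auto simp: kron_def)

lemma unitary_kron:
  assumes "unitary_mat m A" "unitary_mat k B"
  shows "unitary_mat (m * k) (kron A B)"
proof (rule unitary_matI)
  note A = unitary_matD[OF assms(1)] and B = unitary_matD[OF assms(2)]
  show "kron A B \<in> carrier_mat (m * k) (m * k)" using A B by simp
  have "adj (kron A B) * kron A B = kron (adj A * A) (adj B * B)"
    unfolding adj_kron using A B by (intro kron_mult) auto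
  then show "adj (kron A B) * kron A B = 1\<^sub>m (m * k)"
    using A B by (simp add: kron_one)
qed

lemma tight_frame_kron:
  assumes TA: "tight_frame P A m1 n1 cA" and TB: "tight_frame Q B m2 n2 cB"
  shows "tight_frame (P \<times> Q) (\<lambda>(p, p'). kron (A p) (B p')) (m1 * m2) (n1 * n2) (cA * cB)"
proof -
  have "(\<Sum>(p, p')\<in>P \<times> Q. cnj (kron (A p) (B p') $$ (i, j)) * kron (A p) (B p') $$ (k, l))
      = (if (i, j) = (k, l) then complex_of_real (cA * cB) else 0)"
    if ijkl: "i < m1 * m2" "j < n1 * n2" "k < m1 * m2" "l < n1 * n2" for i j k l
  proof -
    have "cnj (kron (A p) (B p') $$ (i, j)) * kron (A p) (B p') $$ (k, l)
        = (cnj (A p $$ (i div m2, j div n2)) * A p $$ (k div m2, l div n2))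
            * (cnj (B p' $$ (i mod m2, j mod n2)) * B p' $$ (k mod m2, l mod n2))"
      if "p \<in> P" "p' \<in> Q" for p p'
      using ijkl tight_frame_carrier[OF TA that(1)] tight_frame_carrier[OF TB that(2)]
      by (simp add: kron_index mult_ac)
    then have "(\<Sum>(p, p')\<in>P \<times> Q. cnj (kron (A p) (B p') $$ (i, j)) * kron (A p) (B p') $$ (k, l))
        = (\<Sum>p\<in>P. cnj (A p $$ (i div m2, j div n2)) * A p $$ (k div m2, l div n2))
          * (\<Sum>p'\<in>Q. cnj (B p' $$ (i mod m2, j mod n2)) * B p' $$ (k mod m2, l mod n2))"
      by (simp add: sum.cartesian_product[symmetric] sum_product)
    also have "\<dots> = (if (i div m2, j div n2) = (k div m2, l div n2) then complex_of_real cA else 0)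
                    * (if (i mod m2, j mod n2) = (k mod m2, l mod n2) then complex_of_real cB else 0)"
      using less_mult_imp_div_mod_less[OF ijkl(1)] less_mult_imp_div_mod_less[OF ijkl(2)]
        less_mult_imp_div_mod_less[OF ijkl(3)] less_mult_imp_div_mod_less[OF ijkl(4)]
      by (simp add: tight_frame_sum[OF TA] tight_frame_sum[OF TB])
    also have "\<dots> = (if (i, j) = (k, l) then complex_of_real (cA * cB) else 0)"
      using div_mod_eq_iff[of i m2 k] div_mod_eq_iff[of j n2 l] by auto
    finally show ?thesis .
  qed
  then show ?thesis
    using TA TB by (intro tight_frameI) (auto simp: tight_frame_carrier split_def)
qed

section \<open>Weyl operators\<close>

lemma Xmat_carrier [simp]: "Xmat N \<in> carrier_mat N N"
  by (rule carrier_matI) (simp_all add: Xmat_def)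

lemma Zmat_carrier [simp]: "Zmat N \<in> carrier_mat N N"
  by (rule carrier_matI) (simp_all add: Zmat_def)

lemma Xmat_dim [simp]: "dim_row (Xmat N) = N" "dim_col (Xmat N) = N"
  by (simp_all add: Xmat_def)

lemma Zmat_dim [simp]: "dim_row (Zmat N) = N" "dim_col (Zmat N) = N"
  by (simp_all add: Zmat_def)

lemma Dq_dim [simp]: "dim_row (Dq N p) = N" "dim_col (Dq N p) = N"
  by (simp_all add: Dq_def Xmat_def Zmat_def)

lemma Xmat_power_index:
  assumes "i < N" "j < N"
  shows "(Xmat N ^\<^sub>m m) $$ (i, j) = (if i = (j + m) mod N then 1 else 0)"
  using assms
proof (induction m arbitrary: i j)
  case (Suc m)
  have "(Xmat N ^\<^sub>m Suc m) $$ (i, j) = (\<Sum>k<N. (Xmat N ^\<^sub>m m) $$ (i, k) * Xmat N $$ (k, j))"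
    unfolding pow_mat.simps(2) using Suc.prems by (intro index_mult_mat_sum) auto
  also have "\<dots> = (\<Sum>k<N. if k = (j + 1) mod N then (if i = (k + m) mod N then 1 else 0) else 0)"
    using Suc by (intro sum.cong) (auto simp: Xmat_def)
  also have "\<dots> = (if i = (j + Suc m) mod N then 1 else 0)"
    using Suc.prems by (simp add: mod_add_left_eq)
  finally show ?case .
qed simp

lemma Zmat_power_index:
  assumes "i < N" "j < N"
  shows "(Zmat N ^\<^sub>m m) $$ (i, j) = (if i = j then omega N ^ (m * j) else 0)"
  using assms
proof (induction m arbitrary: i j)
  case (Suc m)
  have "(Zmat N ^\<^sub>m Suc m) $$ (i, j) = (\<Sum>k<N. (Zmat N ^\<^sub>m m) $$ (i, k) * Zmat N $$ (k, j))"
    unfolding pow_mat.simps(2) using Suc.prems by (intro index_mult_mat_sum) auto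
  also have "\<dots> = (\<Sum>k<N. if k = j then (if i = j then omega N ^ (m * j) * omega N ^ j else 0) else 0)"
    using Suc by (intro sum.cong) (auto simp: Zmat_def)
  also have "\<dots> = (if i = j then omega N ^ (Suc m * j) else 0)"
    using Suc.prems by (simp add: power_add)
  finally show ?case .
qed simp

lemma Dq_carrier [simp]: "Dq N p \<in> carrier_mat N N"
  by (rule carrier_matI) (simp_all add: Dq_def Xmat_def Zmat_def)

lemma Dq_index:
  assumes "i < N" "j < N"
  shows "Dq N (a, b) $$ (i, j) = (if i = (j + a) mod N then tau N ^ (a * b) * omega N ^ (b * j) else 0)"
proof -
  have "(Xmat N ^\<^sub>m a * Zmat N ^\<^sub>m b) $$ (i, j)
      = (\<Sum>k<N. (Xmat N ^\<^sub>m a) $$ (i, k) * (Zmat N ^\<^sub>m b) $$ (k, j))"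
    using assms by (intro index_mult_mat_sum) auto
  also have "\<dots> = (\<Sum>k<N. if k = j then (if i = (j + a) mod N then omega N ^ (b * j) else 0) else 0)"
    using assms by (intro sum.cong refl) (auto simp: Xmat_power_index Zmat_power_index)
  also have "\<dots> = (if i = (j + a) mod N then omega N ^ (b * j) else 0)"
    using assms by simp
  finally show ?thesis
    using assms by (simp add: Dq_def Xmat_def Zmat_def)
qed

lemma Dq_unitary: "unitary_mat N (Dq N (a, b))"
proof (rule unitary_matI)
  let ?D = "Dq N (a, b)"
  show "adj ?D * ?D = 1\<^sub>m N"
  proof (rule eq_matI)
    fix j l assume "j < dim_row (1\<^sub>m N)" "l < dim_col (1\<^sub>m N)"
    then have j: "j < N" and l: "l < N" by auto
    have "(adj ?D * ?D) $$ (j, l) = (\<Sum>i<N. cnj (?D $$ (i, j)) * ?D $$ (i, l))"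
      using j l by (subst index_mult_mat_sum[OF adj_carrier[OF Dq_carrier] Dq_carrier j l]) simp
    also have "\<dots> = 1\<^sub>m N $$ (j, l)"
    proof (cases "j = l")
      case True
      have "cnj (?D $$ (i, j)) * ?D $$ (i, j) = (if i = (j + a) mod N then 1 else 0)" if "i < N" for i
        using that j by (simp add: Dq_index cnj_mult_self_eq_1 norm_mult norm_power
            del: complex_cnj_mult complex_cnj_power)
      then show ?thesis
        using True j sum_delta_add_mod[of "(j + a) mod N" N j 1] by (simp add: add.commute)
    next
      case False
      then have "(j + a) mod N \<noteq> (l + a) mod N"
        using bij_betw_add_mod[of N a] j l by (auto simp: bij_betw_def dest: inj_onD)
      then have "cnj (?D $$ (i, j)) * ?D $$ (i, l) = 0" if "i < N" for i
        using that j l by (simp add: Dq_index)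
      then have "(\<Sum>i<N. cnj (?D $$ (i, j)) * ?D $$ (i, l)) = 0"
        by (intro sum.neutral) simp
      then show ?thesis using False j l by simp
    qed
    finally show "(adj ?D * ?D) $$ (j, l) = 1\<^sub>m N $$ (j, l)" .
  qed auto
qed simp

lemma Dq_index_cnj_mult:
  assumes "i < N" "j < N" "k < N" "l < N"
  shows "cnj (Dq N (a, b) $$ (i, j)) * Dq N (a, b) $$ (k, l)
       = (if i = (j + a) mod N \<and> k = (l + a) mod N then cnj (omega N ^ (b * j)) * omega N ^ (b * l) else 0)"
proof -
  have "cnj (tau N ^ (a * b) * omega N ^ (b * j)) * (tau N ^ (a * b) * omega N ^ (b * l))
      = (cnj (tau N ^ (a * b)) * tau N ^ (a * b)) * (cnj (omega N ^ (b * j)) * omega N ^ (b * l))"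
    by (simp only: complex_cnj_mult mult_ac)
  also have "cnj (tau N ^ (a * b)) * tau N ^ (a * b) = 1"
    by (rule cnj_mult_self_eq_1) (simp add: norm_power)
  finally show ?thesis
    using assms by (simp add: Dq_index)
qed

lemma tight_frame_Dq: "tight_frame ({..<N} \<times> {..<N}) (Dq N) N N (real N)"
proof -
  have "(\<Sum>(a, b)\<in>{..<N} \<times> {..<N}. cnj (Dq N (a, b) $$ (i, j)) * Dq N (a, b) $$ (k, l))
      = (if (i, j) = (k, l) then of_nat N else 0)"
    if ijkl: "i < N" "j < N" "k < N" "l < N" for i j k l
  proof -
    have "(\<Sum>(a, b)\<in>{..<N} \<times> {..<N}. cnj (Dq N (a, b) $$ (i, j)) * Dq N (a, b) $$ (k, l))
        = (\<Sum>a<N. if i = (j + a) mod N \<and> k = (l + a) mod N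
             then (\<Sum>b<N. cnj (omega N ^ (b * j)) * omega N ^ (b * l)) else 0)"
      using ijkl by (auto simp: sum.cartesian_product[symmetric] Dq_index_cnj_mult intro!: sum.cong)
    also have "\<dots> = (\<Sum>a<N. if i = (j + a) mod N \<and> k = (l + a) mod N \<and> j = l then of_nat N else 0)"
      using sum_omega_character[OF ijkl(2) ijkl(4)] by (simp cong: if_cong)
    also have "\<dots> = (if (i, j) = (k, l) then of_nat N else 0)"
    proof (cases "(i, j) = (k, l)")
      case True
      then have "(\<Sum>a<N. if i = (j + a) mod N \<and> k = (l + a) mod N \<and> j = l then of_nat N else 0)
          = (\<Sum>a<N. if i = (a + j) mod N then of_nat N else (0 :: complex))"
        by (simp add: add.commute)
      then show ?thesis using True sum_delta_add_mod[OF ijkl(1)] by simp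
    qed (auto intro!: sum.neutral)
    finally show ?thesis .
  qed
  then show ?thesis by (auto simp: tight_frame_def)
qed

lemma Idx_0: "Idx N 0 = {[]}"
  by (auto simp: Idx_def)

lemma Idx_Suc: "Idx N (Suc n) = (\<lambda>(p, ps). p # ps) ` (({..<N} \<times> {..<N}) \<times> Idx N n)"
  by (auto simp: Idx_def length_Suc_conv image_iff)

lemma finite_Idx: "finite (Idx N n)"
  by (induction n) (auto simp: Idx_0 Idx_Suc)

lemma card_Idx: "card (Idx N n) = (N ^ n) ^ 2"
proof (induction n)
  case (Suc n)
  have "card (Idx N (Suc n)) = card (({..<N} \<times> {..<N}) \<times> Idx N n)"
    unfolding Idx_Suc by (rule card_image) (auto simp: inj_on_def)
  then show ?case using Suc by (simp add: card_cartesian_product power2_eq_square)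
qed (simp add: Idx_0)

lemma Idx_length: "a \<in> Idx N n \<Longrightarrow> length a = n"
  by (simp add: Idx_def)

lemma Dn_carrier: "length ps = n \<Longrightarrow> Dn N ps \<in> carrier_mat (N ^ n) (N ^ n)"
proof (induction ps arbitrary: n)
  case (Cons p ps)
  then show ?case using kron_carrier[OF Dq_carrier[of N p] Cons.IH[OF refl]] by auto
qed simp

lemma Dn_unitary: "length ps = n \<Longrightarrow> unitary_mat (N ^ n) (Dn N ps)"
proof (induction ps arbitrary: n)
  case Nil
  then show ?case by (simp add: unitary_mat_def)
next
  case (Cons p ps)
  then show ?case using unitary_kron[OF Dq_unitary[of N "fst p" "snd p"] Cons.IH[OF refl]] by auto
qed

lemma tight_frame_Dn: "tight_frame (Idx N n) (Dn N) (N ^ n) (N ^ n) (real (N ^ n))"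
proof (induction n)
  case 0
  show ?case by (auto simp: tight_frame_def Idx_0)
next
  case (Suc n)
  have "Dn N \<circ> (\<lambda>(p, ps). p # ps) = (\<lambda>(p, ps). kron (Dq N p) (Dn N ps))"
    by (simp add: fun_eq_iff)
  moreover have "tight_frame (({..<N} \<times> {..<N}) \<times> Idx N n) (\<lambda>(p, ps). kron (Dq N p) (Dn N ps))
      (N ^ Suc n) (N ^ Suc n) (real (N ^ Suc n))"
    using tight_frame_kron[OF tight_frame_Dq Suc.IH] by simp
  moreover have "inj_on (\<lambda>(p, ps). p # ps) (({..<N} \<times> {..<N}) \<times> Idx N n)"
    by (simp add: inj_on_def)
  ultimately show ?case
    unfolding Idx_Suc by (simp add: tight_frame_reindex)
qed

lemma abs_sum_power4_diff_le:
  fixes x y z :: "'a \<Rightarrow> real"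
  assumes I: "finite I" and x0: "\<And>a. a \<in> I \<Longrightarrow> 0 \<le> x a" and y0: "\<And>a. a \<in> I \<Longrightarrow> 0 \<le> y a"
    and sx: "(\<Sum>a\<in>I. x a ^ 2) = s" and sy: "(\<Sum>a\<in>I. y a ^ 2) = s"
    and z: "\<And>a. a \<in> I \<Longrightarrow> \<bar>x a - y a\<bar> \<le> z a"
  shows "\<bar>\<Sum>a\<in>I. x a ^ 4 - y a ^ 4\<bar> \<le> 4 * s * sqrt s * L2_set z I"
proof -
  have s0: "0 \<le> s" using sx by (metis sum_nonneg zero_le_power2)
  have pointwise: "\<bar>x a ^ 4 - y a ^ 4\<bar> \<le> 2 * s * (\<bar>z a\<bar> * \<bar>x a + y a\<bar>)" if a: "a \<in> I" for a
  proof -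
    have "x a ^ 2 \<le> s" "y a ^ 2 \<le> s"
      using member_le_sum[of a I "\<lambda>a. x a ^ 2"] member_le_sum[of a I "\<lambda>a. y a ^ 2"] a I sx sy by auto
    then have "x a ^ 2 + y a ^ 2 \<le> 2 * s" by simp
    have "x a ^ 4 - y a ^ 4 = (x a - y a) * ((x a + y a) * (x a ^ 2 + y a ^ 2))"
      by (simp add: algebra_simps power2_eq_square power4_eq_xxxx)
    moreover have "0 \<le> (x a + y a) * (x a ^ 2 + y a ^ 2)"
      using x0[OF a] y0[OF a] by simp
    ultimately have "\<bar>x a ^ 4 - y a ^ 4\<bar> = \<bar>x a - y a\<bar> * ((x a + y a) * (x a ^ 2 + y a ^ 2))"
      by (simp only: abs_mult[of "x a - y a"] abs_of_nonneg)
    also have "\<dots> \<le> z a * ((x a + y a) * (2 * s))"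
      using z[OF a] x0[OF a] y0[OF a] \<open>x a ^ 2 + y a ^ 2 \<le> 2 * s\<close>
      by (intro mult_mono mult_left_mono) auto
    also have "\<dots> = 2 * s * (\<bar>z a\<bar> * \<bar>x a + y a\<bar>)"
      using z[OF a] x0[OF a] y0[OF a] by (simp add: abs_of_nonneg[of "z a"] order_trans[OF abs_ge_zero])
    finally show ?thesis .
  qed
  have "\<bar>\<Sum>a\<in>I. x a ^ 4 - y a ^ 4\<bar> \<le> 2 * s * (\<Sum>a\<in>I. \<bar>z a\<bar> * \<bar>x a + y a\<bar>)"
    using order_trans[OF sum_abs sum_mono[OF pointwise]] by (simp add: sum_distrib_left)
  also have "\<dots> \<le> 2 * s * (L2_set z I * L2_set (\<lambda>a. x a + y a) I)"
    using s0 by (intro mult_left_mono L2_set_mult_ineq) auto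
  also have "\<dots> \<le> 2 * s * (L2_set z I * (2 * sqrt s))"
  proof -
    have "L2_set (\<lambda>a. x a + y a) I \<le> L2_set x I + L2_set y I" by (rule L2_set_triangle_ineq)
    also have "\<dots> = 2 * sqrt s" by (simp add: L2_set_def sx sy)
    finally show ?thesis using s0 by (intro mult_left_mono) auto
  qed
  finally show ?thesis by (simp add: mult_ac)
qed

lemma sum_cmod_mtrace_Weyl_conj_square:
  assumes W: "unitary_mat (N ^ n) W" and b: "b \<in> Idx N n"
  shows "(\<Sum>a\<in>Idx N n. cmod (mtrace (adj (Dn N a) * (W * Dn N b * adj W))) ^ 2)
       = real (N ^ n) * real (N ^ n)"
proof -
  have G: "unitary_mat (N ^ n) (Dn N b)" by (rule Dn_unitary[OF Idx_length[OF b]])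
  show ?thesis
    using tight_frame_Parseval[OF tight_frame_Dn finite_Idx unitary_conj_carrier[OF W unitary_matD(1)[OF G]]]
      frob_norm_unitary_conj[OF W unitary_matD(1)[OF G]] frob_norm_unitary[OF G]
    by simp
qed

lemma L2_set_cmod_mtrace_Weyl_conj_diff_le:
  assumes U: "unitary_mat (N ^ n) U" and V: "unitary_mat (N ^ n) V" and b: "b \<in> Idx N n"
  shows "L2_set (\<lambda>a. cmod (mtrace (adj (Dn N a) * (U * Dn N b * adj U - V * Dn N b * adj V)))) (Idx N n)
       \<le> sqrt (real (N ^ n)) * (2 * frob_norm (U - V))"
proof -
  let ?M = "U * Dn N b * adj U - V * Dn N b * adj V"
  have G: "unitary_mat (N ^ n) (Dn N b)" by (rule Dn_unitary[OF Idx_length[OF b]])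
  have M: "?M \<in> carrier_mat (N ^ n) (N ^ n)"
    by (rule minus_carrier_mat[OF unitary_conj_carrier[OF V unitary_matD(1)[OF G]]])
  have "L2_set (\<lambda>a. cmod (mtrace (adj (Dn N a) * ?M))) (Idx N n) = sqrt (real (N ^ n)) * frob_norm ?M"
    using tight_frame_Parseval[OF tight_frame_Dn finite_Idx M] frob_norm_nonneg[OF M]
    by (simp add: L2_set_def real_sqrt_mult)
  also have "\<dots> \<le> sqrt (real (N ^ n)) * (2 * frob_norm (U - V))"
    using frob_norm_unitary_conj_diff_le[OF U V G] by (simp add: mult_left_mono)
  finally show ?thesis .
qed

lemma abs_sum_Weyl_power4_diff_le:
  assumes U: "unitary_mat (N ^ n) U" and V: "unitary_mat (N ^ n) V" and b: "b \<in> Idx N n"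
  shows "\<bar>\<Sum>a\<in>Idx N n. cmod (mtrace (adj (Dn N a) * (U * Dn N b * adj U))) ^ 4
              - cmod (mtrace (adj (Dn N a) * (V * Dn N b * adj V))) ^ 4\<bar>
         \<le> 8 * real (N ^ n) ^ 3 * sqrt (real (N ^ n)) * frob_norm (U - V)"
proof -
  let ?d = "real (N ^ n)"
  have "\<bar>\<Sum>a\<in>Idx N n. cmod (mtrace (adj (Dn N a) * (U * Dn N b * adj U))) ^ 4
              - cmod (mtrace (adj (Dn N a) * (V * Dn N b * adj V))) ^ 4\<bar>
      \<le> 4 * (?d * ?d) * sqrt (?d * ?d)
        * L2_set (\<lambda>a. cmod (mtrace (adj (Dn N a) * (U * Dn N b * adj U - V * Dn N b * adj V)))) (Idx N n)"
  proof (rule abs_sum_power4_diff_le[OF finite_Idx _ _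
        sum_cmod_mtrace_Weyl_conj_square[OF U b] sum_cmod_mtrace_Weyl_conj_square[OF V b]])
    fix a assume "a \<in> Idx N n"
    note Dn_carrier[OF Idx_length[OF this], of N]
      unitary_conj_carrier[OF U Dn_carrier[OF Idx_length[OF b]]]
      unitary_conj_carrier[OF V Dn_carrier[OF Idx_length[OF b]]]
    then show "\<bar>cmod (mtrace (adj (Dn N a) * (U * Dn N b * adj U)))
          - cmod (mtrace (adj (Dn N a) * (V * Dn N b * adj V)))\<bar>
        \<le> cmod (mtrace (adj (Dn N a) * (U * Dn N b * adj U - V * Dn N b * adj V)))"
      by (simp add: mtrace_adj_mult_minus norm_triangle_ineq3)
  qed simp_all
  also have "\<dots> \<le> 4 * (?d * ?d) * sqrt (?d * ?d) * (sqrt ?d * (2 * frob_norm (U - V)))"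
    by (rule mult_left_mono[OF L2_set_cmod_mtrace_Weyl_conj_diff_le[OF U V b]]) simp
  finally show ?thesis by (simp add: power3_eq_cube mult_ac)
qed

lemma H2_eq_sum:
  assumes U: "unitary_mat (N ^ n) U"
  shows "H2 N n U = 1 - (\<Sum>b\<in>Idx N n. \<Sum>a\<in>Idx N n.
      cmod (mtrace (adj (Dn N a) * (U * Dn N b * adj U))) ^ 4) / real (N ^ n) ^ 6"
proof -
  note Uc = unitary_matD(1,2)[OF U]
  have assoc: "adj (Dn N a) * U * Dn N b * adj U = adj (Dn N a) * (U * Dn N b * adj U)"
    if "a \<in> Idx N n" "b \<in> Idx N n" for a b
  proof -
    note Da = adj_carrier[OF Dn_carrier[OF Idx_length[OF that(1)], of N]]
      and Db = Dn_carrier[OF Idx_length[OF that(2)], of N]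
    show ?thesis
      by (simp only: assoc_mult_mat[OF Da Uc(1) Db] assoc_mult_mat[OF Da mult_carrier_mat[OF Uc(1) Db] Uc(2)])
  qed
  show ?thesis
    unfolding H2_def by (subst sum.swap) (simp add: assoc)
qed

lemma abs_H2_diff_le:
  assumes U: "unitary_mat (N ^ n) U" and V: "unitary_mat (N ^ n) V"
  shows "\<bar>H2 N n U - H2 N n V\<bar> \<le> 8 / sqrt (real (N ^ n)) * frob_norm (U - V)"
proof -
  let ?d = "real (N ^ n)" and ?I = "Idx N n"
  define f where "f W a b = cmod (mtrace (adj (Dn N a) * (W * Dn N b * adj W))) ^ 4" for W a b
  have "H2 N n V - H2 N n U = (\<Sum>b\<in>?I. \<Sum>a\<in>?I. f U a b - f V a b) / ?d ^ 6"
    by (simp add: H2_eq_sum[OF U] H2_eq_sum[OF V] f_def sum_subtractf diff_divide_distrib)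
  then have "\<bar>H2 N n U - H2 N n V\<bar> = \<bar>\<Sum>b\<in>?I. \<Sum>a\<in>?I. f U a b - f V a b\<bar> / ?d ^ 6"
    unfolding abs_minus_commute[of "H2 N n U"] by (simp add: abs_divide)
  also have "\<dots> \<le> (\<Sum>b\<in>?I. \<bar>\<Sum>a\<in>?I. f U a b - f V a b\<bar>) / ?d ^ 6"
    by (intro divide_right_mono sum_abs) simp
  also have "\<dots> \<le> (\<Sum>b\<in>?I. 8 * ?d ^ 3 * sqrt ?d * frob_norm (U - V)) / ?d ^ 6"
    unfolding f_def by (intro divide_right_mono sum_mono abs_sum_Weyl_power4_diff_le U V) simp_all
  also have "\<dots> = ?d ^ 2 * (8 * ?d ^ 3 * sqrt ?d * frob_norm (U - V)) / ?d ^ 6"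
    by (simp only: sum_constant card_Idx of_nat_power)
  also have "\<dots> = 8 / sqrt ?d * frob_norm (U - V)"
  proof -
    \<comment> \<open>Also for \<open>x = 0\<close>, where both sides vanish because division by zero yields zero.\<close>
    have "x ^ 2 * (8 * x ^ 3 * sqrt x * F) / x ^ 6 = 8 / sqrt x * F" if "0 \<le> x" for x F :: real
    proof (cases "x = 0")
      case False
      then have "sqrt x * sqrt x = x" "0 < x" using that by simp_all
      then show ?thesis by (simp add: field_simps eval_nat_numeral)
    qed simp
    then show ?thesis by simp
  qed
  finally show ?thesis .
qed

theorem corollary2:
  fixes dL n :: nat and U V :: "complex mat"
  assumes "unitary_mat (dL ^ n) U" and "unitary_mat (dL ^ n) V"
  shows "\<bar>H2 dL n U - H2 dL n V\<bar> \<le> 4 * pi / sqrt (real (dL ^ n)) * frob_norm (U - V)"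
proof -
  have "0 \<le> frob_norm (U - V)"
    using assms by (intro frob_norm_nonneg[of _ "dL ^ n" "dL ^ n"] minus_carrier_mat) (simp add: unitary_mat_def)
  then have "8 / sqrt (real (dL ^ n)) * frob_norm (U - V) \<le> 4 * pi / sqrt (real (dL ^ n)) * frob_norm (U - V)"
    using pi_ge_two by (intro mult_right_mono divide_right_mono) auto
  with abs_H2_diff_le[OF assms] show ?thesis by linarith
qed

end
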